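(* Let $T$ be a binary decision tree (every internal node has exactly two children) of height $h\ge 1$ for a binary classification problem with a favorable and an unfavorable class, in which no internal node has two leaf children predicting the same class (such non-distinguishing splits having been pruned). The PAFER procedure for estimating Statistical Parity of $T$ issues one histogram query for the sensitive-attribute composition of the whole dataset plus one histogram query for each favorable decision rule of $T$, i.e. for each root-to-leaf path ending in a leaf that predicts the favorable class. Then the number $Q$ of queries issued by PAFER satisfies $2 \le Q \le 2^{h-1}+1$.
   Context: The height $h$ of a tree is the maximum number of edges on a root-to-leaf path. A decision rule of a decision tree is the conjunction of the branch conditions along a root-to-leaf path; it is favorable if the leaf it ends in predicts the favorable class. A histogram query asks a data holder, for the set of individuals satisfying a given rule, for the number of individuals in each group of the sensitive attribute. *)

theory Defs
  imports Main
begin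

text \<open>Binary decision trees: an internal node carries a branch condition of type 'c
and has exactly two children; a leaf predicts a class, True = favorable class.\<close>
datatype 'c dtree = Leaf bool | Node 'c "'c dtree" "'c dtree"

fun height :: "'c dtree \<Rightarrow> nat" where
  "height (Leaf _) = 0"
| "height (Node _ l r) = Suc (max (height l) (height r))"

fun pruned :: "'c dtree \<Rightarrow> bool" where
  "pruned (Leaf _) = True"
| "pruned (Node _ l r) =
     ((\<forall>b. \<not> (l = Leaf b \<and> r = Leaf b)) \<and> pruned l \<and> pruned r)"

text \<open>Root-to-leaf paths (decision rules), encoded by the branch conditions taken:
each step records the condition of the node and whether the rule takes it positively
(True = left branch, condition holds) or negatively.\<close>
fun rules :: "'c dtree \<Rightarrow> (('c \<times> bool) list \<times> bool) set" where
  "rules (Leaf b) = {([], b)}"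
| "rules (Node c l r) =
     (\<lambda>(p, b). ((c, True) # p, b)) ` rules l \<union> (\<lambda>(p, b). ((c, False) # p, b)) ` rules r"

definition favorable_rules :: "'c dtree \<Rightarrow> ('c \<times> bool) list set" where
  "favorable_rules t = {p. (p, True) \<in> rules t}"

definition pafer_queries :: "'c dtree \<Rightarrow> nat" where
  "pafer_queries t = 1 + card (favorable_rules t)"

end

theory Submission
  imports Defs
begin

text \<open>The favorable rules of a node are those of its two subtrees, prefixed by the two
opposite literals of the node's condition, so their number is additive. A pruned
tree of height at least one always contains a favorable leaf: descend into a subtree
that is not a leaf, and at a node with two leaf children the classes differ. For the
upper bound, read with truncated subtraction the claim is that a pruned tree has at
most 2^(height t - 1) favorable rules; at a node with two leaf children this
is exactly one, and otherwise the two subtrees share the doubled budget.\<close>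

lemma favorable_rules_Leaf: "favorable_rules (Leaf b) = (if b then {[]} else {})"
  by (auto simp: favorable_rules_def)

lemma favorable_rules_Node:
  "favorable_rules (Node c l r) =
     (#) (c, True) ` favorable_rules l \<union> (#) (c, False) ` favorable_rules r"
  unfolding favorable_rules_def by (auto simp: image_iff split: prod.splits)

lemma finite_favorable_rules: "finite (favorable_rules t)"
  by (induction t) (simp_all add: favorable_rules_Leaf favorable_rules_Node)

lemma card_favorable_rules_Node:
  "card (favorable_rules (Node c l r)) = card (favorable_rules l) + card (favorable_rules r)"
proof -
  have "card (favorable_rules (Node c l r)) =
      card ((#) (c, True) ` favorable_rules l) + card ((#) (c, False) ` favorable_rules r)"
    unfolding favorable_rules_Node
    by (rule card_Un_disjoint) (auto simp: finite_favorable_rules)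
  then show ?thesis
    by (simp add: card_image)
qed

lemma favorable_rules_nonempty:
  assumes "pruned t" and "height t \<ge> 1"
  shows "favorable_rules t \<noteq> {}"
  using assms
proof (induction t)
  case (Leaf b)
  then show ?case by simp
next
  case (Node c l r)
  consider (left) "height l \<ge> 1" | (right) "height r \<ge> 1"
    | (leaves) bl br where "l = Leaf bl" "r = Leaf br"
    by (cases l; cases r) auto
  then show ?case
  proof cases
    case left
    with Node show ?thesis by (simp add: favorable_rules_Node)
  next
    case right
    with Node show ?thesis by (simp add: favorable_rules_Node)
  next
    case leaves
    with Node.prems have "bl \<or> br" by auto
    with leaves show ?thesis by (auto simp: favorable_rules_Node favorable_rules_Leaf)
  qed
qed

lemma card_favorable_rules_le:
  assumes "pruned t"
  shows "card (favorable_rules t) \<le> 2 ^ (height t - 1)"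
  using assms
proof (induction t)
  case (Leaf b)
  then show ?case by (simp add: favorable_rules_Leaf)
next
  case (Node c l r)
  define m where "m = max (height l) (height r)"
  show ?case
  proof (cases "m = 0")
    case True
    then obtain bl br where "l = Leaf bl" "r = Leaf br"
      unfolding m_def by (cases l; cases r) auto
    with Node.prems have "bl \<noteq> br" by auto
    with \<open>l = Leaf bl\<close> \<open>r = Leaf br\<close> show ?thesis
      by (auto simp: card_favorable_rules_Node favorable_rules_Leaf)
  next
    case False
    have "card (favorable_rules l) \<le> 2 ^ (m - 1)"
    proof -
      have "card (favorable_rules l) \<le> 2 ^ (height l - 1)"
        using Node by simp
      also have "\<dots> \<le> 2 ^ (m - 1)"
        by (rule power_increasing) (auto simp: m_def)
      finally show ?thesis .
    qed
    moreover have "card (favorable_rules r) \<le> 2 ^ (m - 1)"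
    proof -
      have "card (favorable_rules r) \<le> 2 ^ (height r - 1)"
        using Node by simp
      also have "\<dots> \<le> 2 ^ (m - 1)"
        by (rule power_increasing) (auto simp: m_def)
      finally show ?thesis .
    qed
    moreover have "2 ^ (m - 1) + 2 ^ (m - 1) = (2::nat) ^ (height (Node c l r) - 1)"
      using False by (simp add: m_def power_eq_if)
    ultimately show ?thesis
      by (simp add: card_favorable_rules_Node)
  qed
qed

theorem theorem1:
  fixes T :: "'c dtree"
  assumes "height T \<ge> 1" and "pruned T"
  shows "2 \<le> pafer_queries T \<and> pafer_queries T \<le> 2 ^ (height T - 1) + 1"
proof -
  have "card (favorable_rules T) \<ge> 1"
    using favorable_rules_nonempty[OF assms(2,1)] finite_favorable_rules
    by (simp add: Suc_le_eq card_gt_0_iff)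
  with card_favorable_rules_le[OF assms(2)] show ?thesis
    by (simp add: pafer_queries_def)
qed

end
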